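(* Let $\boldsymbol X$ be an $n\times d$ data matrix and let $\widehat{\boldsymbol\Sigma}$ be a covariance estimator, i.e. a map assigning to every $n\times d$ data matrix a symmetric positive semidefinite $d\times d$ matrix, satisfying: whenever all rows of a data matrix lie in a lower-dimensional affine subspace of $\mathbb R^d$, the estimate $\widehat{\boldsymbol\Sigma}$ of that data matrix is singular. Then the cellwise implosion breakdown value satisfies $$\varepsilon^-_n(\widehat{\boldsymbol\Sigma},\boldsymbol X)\leqslant \left\lceil\frac{n-1}{d}\right\rceil\Big/n .$$
   Context: For an integer $m\ge0$, $\boldsymbol X^m$ denotes any matrix obtained from $\boldsymbol X$ by replacing at most $m$ cells in each column by arbitrary real values. The cellwise implosion breakdown value is $\varepsilon^-_n(\widehat{\boldsymbol\Sigma},\boldsymbol X)=\min\{\tfrac{m}{n}:\ \inf_{\boldsymbol X^m}\lambda_d(\widehat{\boldsymbol\Sigma}(\boldsymbol X^m))=0\}$, where $\lambda_d$ denotes the smallest eigenvalue and the infimum is over all such corrupted matrices $\boldsymbol X^m$. *)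

theory Defs
  imports "HOL-Analysis.Analysis"
begin

text \<open>Data matrices are n x d real matrices: rows indexed by type 'n, columns by type 'd.
  Row i of X is X $ i.\<close>

definition sym_psd :: "real^'d^'d \<Rightarrow> bool" where
  "sym_psd A \<longleftrightarrow> transpose A = A \<and> (\<forall>v. 0 \<le> v \<bullet> (A *v v))"

definition eigenvalues_mat :: "real^'d^'d \<Rightarrow> real set" where
  "eigenvalues_mat A = {c. \<exists>v. v \<noteq> 0 \<and> A *v v = c *\<^sub>R v}"

definition lambda_min :: "real^'d^'d \<Rightarrow> real" where
  "lambda_min A = Min (eigenvalues_mat A)"

definition cell_corrupt :: "nat \<Rightarrow> real^'d^'n \<Rightarrow> real^'d^'n \<Rightarrow> bool" where
  "cell_corrupt m X Y \<longleftrightarrow> (\<forall>j. card {i. Y $ i $ j \<noteq> X $ i $ j} \<le> m)"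

definition implosion_bdv ::
  "(real^'d^'n \<Rightarrow> real^'d^'d) \<Rightarrow> real^'d^'n \<Rightarrow> real" where
  "implosion_bdv Est X =
     Inf {real m / real CARD('n) | m.
            Inf {lambda_min (Est Y) | Y. cell_corrupt m X Y} = 0}"

definition rows_in_lower_affine :: "real^'d^'n \<Rightarrow> bool" where
  "rows_in_lower_affine X \<longleftrightarrow>
     (\<exists>S. affine S \<and> aff_dim S < int CARD('d) \<and> (\<forall>i. X $ i \<in> S))"

end

theory Submission
  imports Defs
begin

(* Fix a reference row i0 and assign each of the other n - 1 rows to a column so that no
   column receives more than m = ceil((n - 1) / d) rows. Changing, in each of these rows, the
   cell of its assigned column so that the row sum equals that of row i0 puts all rows on an
   affine hyperplane, so the estimate becomes singular. A singular symmetric psd matrix has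
   smallest eigenvalue 0 and every symmetric psd matrix has smallest eigenvalue at least 0;
   since lambda_min is a Min, the latter needs an eigenvector (a maximiser of the quadratic
   form on the unit sphere) and a finite spectrum (eigenvectors of distinct eigenvalues are
   orthogonal). Hence the infimum defining the breakdown value at level m is 0. *)

lemma linear_coeff_zero_if_quadratic_nonneg:
  fixes a b :: real
  assumes "\<And>t. 0 \<le> a * t + b * t\<^sup>2"
  shows "a = 0"
proof (rule ccontr)
  assume "a \<noteq> 0"
  define c where "c = \<bar>b\<bar> + 1"
  have "c > 0" "b < c" unfolding c_def by auto
  have "a * (- a / c) + b * (- a / c)\<^sup>2 = a\<^sup>2 * (b - c) / c\<^sup>2"
    using \<open>c > 0\<close> by (simp add: field_simps power2_eq_square)
  also have "\<dots> < 0"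
    using \<open>a \<noteq> 0\<close> \<open>b < c\<close> \<open>c > 0\<close> by (intro divide_neg_pos mult_pos_neg) auto
  finally show False using assms[of "- a / c"] by simp
qed

lemma transpose_diff:
  fixes A B :: "'a::ab_group_add^'n^'m"
  shows "transpose (A - B) = transpose A - transpose B"
  by (simp add: transpose_def vec_eq_iff)

lemma matrix_vector_mult_mat: "mat c *v x = c *\<^sub>R (x :: real^'n)"
  by (simp add: vec_eq_iff matrix_vector_mult_def mat_def if_distrib[of "\<lambda>x. x * _"] cong: if_cong)

lemma symmetric_matrix_inner_commute:
  fixes A :: "real^'d^'d"
  assumes "transpose A = A"
  shows "(A *v x) \<bullet> y = x \<bullet> (A *v y)"
  by (metis assms dot_lmul_matrix transpose_matrix_vector)

lemma psd_quadratic_form_zero_imp_kernel: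
  fixes B :: "real^'d^'d"
  assumes B_sym: "transpose B = B" and psd: "\<And>v. 0 \<le> v \<bullet> (B *v v)"
    and zero: "x \<bullet> (B *v x) = 0"
  shows "B *v x = 0"
proof -
  let ?w = "B *v x"
  have "x \<bullet> (B *v ?w) = ?w \<bullet> ?w"
    by (simp add: symmetric_matrix_inner_commute[OF B_sym, symmetric])
  then have expand: "(x + t *\<^sub>R ?w) \<bullet> (B *v (x + t *\<^sub>R ?w))
      = 2 * (?w \<bullet> ?w) * t + (?w \<bullet> (B *v ?w)) * t\<^sup>2" for t
    using zero by (simp add: matrix_vector_right_distrib matrix_vector_mult_scaleR
        inner_add_left inner_add_right inner_commute power2_eq_square algebra_simps)
  have "2 * (?w \<bullet> ?w) = 0"
  proof (rule linear_coeff_zero_if_quadratic_nonneg)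
    show "0 \<le> 2 * (?w \<bullet> ?w) * t + (?w \<bullet> (B *v ?w)) * t\<^sup>2" for t
      using psd[of "x + t *\<^sub>R ?w"] by (simp only: expand)
  qed
  then show ?thesis by simp
qed

lemma symmetric_matrix_has_eigenvector:
  fixes A :: "real^'d^'d"
  assumes A_sym: "transpose A = A"
  shows "\<exists>v c. v \<noteq> 0 \<and> A *v v = c *\<^sub>R v"
proof -
  let ?q = "\<lambda>x::real^'d. x \<bullet> (A *v x)"
  have cont: "continuous_on (sphere 0 1) ?q"
    by (intro continuous_intros matrix_vector_mult_linear_continuous_on)
  have "sphere (0::real^'d) 1 \<noteq> {}" by simp
  then obtain x where "x \<in> sphere 0 1" "\<forall>y \<in> sphere 0 1. ?q y \<le> ?q x"
    using continuous_attains_sup[OF compact_sphere _ cont] by blast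
  then have x: "norm x = 1" and x_max: "\<And>y. norm y = 1 \<Longrightarrow> ?q y \<le> ?q x" by simp_all
  define l where "l = ?q x"
  have shift: "(mat l - A) *v z = l *\<^sub>R z - A *v z" for z
    by (simp add: matrix_vector_mult_diff_rdistrib matrix_vector_mult_mat)
  have "transpose (mat l - A) = mat l - A"
    using A_sym by (simp add: transpose_diff)
  moreover have "0 \<le> z \<bullet> ((mat l - A) *v z)" for z
  proof (cases "z = 0")
    case False
    have "norm (sgn z) = 1" using False by (simp add: norm_sgn)
    then have "?q (sgn z) \<le> l" unfolding l_def by (rule x_max)
    moreover have "?q (sgn z) = ?q z / (z \<bullet> z)"
      by (simp add: sgn_div_norm matrix_vector_mult_scaleR dot_square_norm power2_eq_square
          divide_inverse)
    moreover have "0 < z \<bullet> z" using False by simp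
    ultimately have "?q z \<le> l * (z \<bullet> z)" by (simp add: pos_divide_le_eq)
    then show ?thesis unfolding shift by (simp add: inner_diff_right)
  qed simp
  moreover have "x \<bullet> ((mat l - A) *v x) = 0"
    using x unfolding shift by (simp add: inner_diff_right l_def dot_square_norm)
  ultimately have "(mat l - A) *v x = 0" by (rule psd_quadratic_form_zero_imp_kernel)
  then have "A *v x = l *\<^sub>R x" by (simp add: shift)
  moreover have "x \<noteq> 0" using x by auto
  ultimately show ?thesis by blast
qed

lemma symmetric_eigenvectors_orthogonal:
  fixes A :: "real^'d^'d"
  assumes "transpose A = A" "A *v v = c *\<^sub>R v" "A *v w = c' *\<^sub>R w" "c \<noteq> c'"
  shows "orthogonal v w"
proof -
  have "c * (v \<bullet> w) = (A *v v) \<bullet> w" using assms(2) by simp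
  also have "\<dots> = v \<bullet> (A *v w)" by (rule symmetric_matrix_inner_commute[OF assms(1)])
  also have "\<dots> = c' * (v \<bullet> w)" using assms(3) by simp
  finally show ?thesis using assms(4) by (simp add: orthogonal_def)
qed

lemma finite_eigenvalues_mat_symmetric:
  fixes A :: "real^'d^'d"
  assumes A_sym: "transpose A = A"
  shows "finite (eigenvalues_mat A)"
proof -
  let ?E = "eigenvalues_mat A"
  have "\<forall>c \<in> ?E. \<exists>v. v \<noteq> 0 \<and> A *v v = c *\<^sub>R v" by (simp add: eigenvalues_mat_def)
  then obtain g where "\<forall>c \<in> ?E. g c \<noteq> 0 \<and> A *v g c = c *\<^sub>R g c"
    using bchoice by metis
  then have g0: "g c \<noteq> 0" and gA: "A *v g c = c *\<^sub>R g c" if "c \<in> ?E" for c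
    using that by simp_all
  have "inj_on g ?E"
  proof (rule inj_onI)
    fix c c' assume c: "c \<in> ?E" and c': "c' \<in> ?E" and same: "g c = g c'"
    have "c *\<^sub>R g c = c' *\<^sub>R g c" using gA[OF c] gA[OF c'] unfolding same by (rule subst)
    then show "c = c'" using g0[OF c] by simp
  qed
  moreover have "finite (g ` ?E)"
  proof -
    have "pairwise orthogonal (g ` ?E)"
    proof (rule pairwise_imageI)
      fix c c' assume "c \<in> ?E" "c' \<in> ?E" "c \<noteq> c'"
      then show "orthogonal (g c) (g c')"
        by (intro symmetric_eigenvectors_orthogonal[OF A_sym gA gA])
    qed
    moreover have "0 \<notin> g ` ?E" using g0 by auto
    ultimately have "independent (g ` ?E)" by (rule pairwise_orthogonal_independent)
    then show ?thesis by (rule independent_bound[THEN conjunct1])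
  qed
  ultimately show ?thesis by (rule finite_imageD[rotated])
qed

lemma lambda_min_nonneg:
  fixes A :: "real^'d^'d"
  assumes "sym_psd A"
  shows "0 \<le> lambda_min A"
proof -
  have A_sym: "transpose A = A" and psd: "\<And>v. 0 \<le> v \<bullet> (A *v v)"
    using assms unfolding sym_psd_def by auto
  have "0 \<le> c" if "c \<in> eigenvalues_mat A" for c
  proof -
    have "\<exists>v. v \<noteq> 0 \<and> A *v v = c *\<^sub>R v" using that by (simp add: eigenvalues_mat_def)
    then obtain v where v: "v \<noteq> 0" "A *v v = c *\<^sub>R v" by blast
    have "0 \<le> v \<bullet> (A *v v)" by (rule psd)
    also have "\<dots> = c * (v \<bullet> v)" unfolding v(2) by (rule inner_scaleR_right)
    finally have "0 \<le> c * (v \<bullet> v)" .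
    moreover have "0 < v \<bullet> v" using v(1) by simp
    ultimately show ?thesis by (simp add: zero_le_mult_iff)
  qed
  moreover obtain v c where "v \<noteq> 0" "A *v v = c *\<^sub>R v"
    using symmetric_matrix_has_eigenvector[OF A_sym] by blast
  then have "c \<in> eigenvalues_mat A" by (auto simp: eigenvalues_mat_def)
  then have "eigenvalues_mat A \<noteq> {}" by blast
  ultimately show ?thesis
    unfolding lambda_min_def using finite_eigenvalues_mat_symmetric[OF A_sym] by simp
qed

lemma lambda_min_eq_0_if_singular:
  fixes A :: "real^'d^'d"
  assumes "sym_psd A" "\<not> invertible A"
  shows "lambda_min A = 0"
proof -
  have "finite (eigenvalues_mat A)"
    using assms(1) finite_eigenvalues_mat_symmetric unfolding sym_psd_def by blast
  moreover obtain v where "A *v v = 0" "v \<noteq> 0"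
    using assms(2) unfolding invertible_left_inverse matrix_left_invertible_ker by blast
  then have "0 \<in> eigenvalues_mat A" unfolding eigenvalues_mat_def by auto
  ultimately have "lambda_min A \<le> 0" unfolding lambda_min_def by simp
  then show ?thesis using lambda_min_nonneg[OF assms(1)] by simp
qed

lemma exists_map_with_bounded_fibres:
  assumes "finite A" "finite B" "card A \<le> m * card B"
  obtains f where "f ` A \<subseteq> B" "\<And>b. card {a \<in> A. f a = b} \<le> m"
proof -
  have "finite (B \<times> {..<m})" using assms(2) by simp
  moreover have "card A \<le> card (B \<times> {..<m})"
    using assms(3) by (simp add: card_cartesian_product mult.commute)
  ultimately obtain g where g: "g ` A \<subseteq> B \<times> {..<m}" "inj_on g A"
    using card_le_inj[OF assms(1)] by blast
  have "card {a \<in> A. fst (g a) = b} \<le> m" for b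
  proof -
    have "inj_on (snd \<circ> g) {a \<in> A. fst (g a) = b}"
      using g(2) by (auto simp: inj_on_def prod_eq_iff)
    moreover have "(snd \<circ> g) ` {a \<in> A. fst (g a) = b} \<subseteq> {..<m}" using g(1) by auto
    ultimately have "card {a \<in> A. fst (g a) = b} \<le> card {..<m}"
      by (rule card_inj_on_le) simp
    then show ?thesis by simp
  qed
  moreover have "(fst \<circ> g) ` A \<subseteq> B" using g(1) by auto
  ultimately show thesis using that[of "fst \<circ> g"] by simp
qed

lemma rows_in_lower_affine_if_equal_row_sums:
  fixes Y :: "real^'d^'n"
  assumes "\<And>i. (\<Sum>j\<in>UNIV. Y $ i $ j) = c"
  shows "rows_in_lower_affine Y"
  unfolding rows_in_lower_affine_def
proof (intro exI conjI allI)
  let ?one = "\<chi> j. 1 :: real^'d"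
  have "?one \<noteq> 0" by (metis vec_lambda_beta zero_index zero_neq_one)
  show "affine {x. ?one \<bullet> x = c}" by (rule affine_hyperplane)
  show "aff_dim {x. ?one \<bullet> x = c} < int CARD('d)"
    using aff_dim_hyperplane[OF \<open>?one \<noteq> 0\<close>] by simp
  show "Y $ i \<in> {x. ?one \<bullet> x = c}" for i using assms[of i] by (simp add: inner_vec_def)
qed

lemma exists_corruption_with_rows_in_lower_affine:
  fixes X :: "real^'d^'n"
  assumes "CARD('n) - 1 \<le> m * CARD('d)"
  shows "\<exists>Y. cell_corrupt m X Y \<and> rows_in_lower_affine Y"
proof -
  fix i0 :: 'n
  have card_bound: "card (UNIV - {i0}) \<le> m * card (UNIV :: 'd set)"
    using assms by (simp add: card_Diff_singleton)
  obtain f :: "'n \<Rightarrow> 'd" where f: "\<And>j. card {i \<in> UNIV - {i0}. f i = j} \<le> m"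
    by (rule exists_map_with_bounded_fibres[OF finite finite card_bound], rule that)
  define s where "s i = (\<Sum>j\<in>UNIV. X $ i $ j)" for i
  define Y where "Y = (\<chi> i j. if i \<noteq> i0 \<and> j = f i then X $ i $ j + (s i0 - s i) else X $ i $ j)"
  have "(\<Sum>j\<in>UNIV. Y $ i $ j) = s i0" for i
  proof (cases "i = i0")
    case False
    then have "(\<Sum>j\<in>UNIV. Y $ i $ j) = (\<Sum>j\<in>UNIV. X $ i $ j + (if j = f i then s i0 - s i else 0))"
      unfolding Y_def by (intro sum.cong) auto
    then show ?thesis by (simp add: sum.distrib s_def)
  qed (simp add: Y_def s_def)
  then have "rows_in_lower_affine Y" by (rule rows_in_lower_affine_if_equal_row_sums)
  moreover have "cell_corrupt m X Y"
    unfolding cell_corrupt_def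
  proof
    fix j
    have "{i. Y $ i $ j \<noteq> X $ i $ j} \<subseteq> {i \<in> UNIV - {i0}. f i = j}"
      unfolding Y_def by (auto split: if_splits)
    then have "card {i. Y $ i $ j \<noteq> X $ i $ j} \<le> card {i \<in> UNIV - {i0}. f i = j}"
      by (rule card_mono[OF finite])
    then show "card {i. Y $ i $ j \<noteq> X $ i $ j} \<le> m" using f[of j] by simp
  qed
  ultimately show ?thesis by blast
qed

lemma le_nat_ceiling_divide_mult:
  assumes "0 < d"
  shows "n \<le> nat \<lceil>real n / real d\<rceil> * d"
proof -
  have "real n \<le> real_of_int \<lceil>real n / real d\<rceil> * real d"
    using assms by (simp add: pos_divide_le_eq[symmetric])
  also have "\<dots> = real (nat \<lceil>real n / real d\<rceil> * d)" by simp
  finally show ?thesis by (simp only: of_nat_le_iff)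
qed

lemma implosion_bdv_le:
  fixes Est :: "real^'d^'n \<Rightarrow> real^'d^'d" and X Y :: "real^'d^'n"
  assumes "\<And>Y. 0 \<le> lambda_min (Est Y)"
    and "cell_corrupt m X Y" and "lambda_min (Est Y) = 0"
  shows "implosion_bdv Est X \<le> real m / real CARD('n)"
proof -
  have "Inf {lambda_min (Est Y) | Y. cell_corrupt m X Y} = 0"
    using assms by (intro cInf_eq_minimum) auto
  then show ?thesis
    unfolding implosion_bdv_def by (intro cInf_lower bdd_belowI[where m = 0]) auto
qed

theorem proposition2:
  fixes Est :: "real^'d^'n \<Rightarrow> real^'d^'d" and X :: "real^'d^'n"
  assumes "\<And>Y. sym_psd (Est Y)"
    and "\<And>Y. rows_in_lower_affine Y \<Longrightarrow> \<not> invertible (Est Y)"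
  shows "implosion_bdv Est X
           \<le> real_of_int \<lceil>(real CARD('n) - 1) / real CARD('d)\<rceil> / real CARD('n)"
proof -
  define m where "m = nat \<lceil>(real CARD('n) - 1) / real CARD('d)\<rceil>"
  have "real (CARD('n) - 1) = real CARD('n) - 1" by (simp add: Suc_leI)
  then have "CARD('n) - 1 \<le> m * CARD('d)"
    unfolding m_def using le_nat_ceiling_divide_mult[of "CARD('d)" "CARD('n) - 1"] by simp
  then obtain Y where corrupt: "cell_corrupt m X Y" and "rows_in_lower_affine Y"
    using exists_corruption_with_rows_in_lower_affine by blast
  then have "lambda_min (Est Y) = 0"
    by (intro lambda_min_eq_0_if_singular assms)
  then have "implosion_bdv Est X \<le> real m / real CARD('n)"
    by (intro implosion_bdv_le[OF _ corrupt] lambda_min_nonneg assms(1))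
  moreover have "real m = real_of_int \<lceil>(real CARD('n) - 1) / real CARD('d)\<rceil>"
    unfolding m_def by simp
  ultimately show ?thesis by simp
qed

end
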